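(* For any $\mathcal A,\mathcal B\in\mathbb Q^{n\times n\times n_3}$, \[0<\rho_{QT}(\mathcal A*_Q\mathcal B)<1\iff 0<\rho_{QT}(\mathcal B*_Q\mathcal A)<1.\]
   Context: $\mathbb Q$ denotes the real quaternions with the usual Hamilton multiplication and $|a|=\sqrt{a_0^2+a_1^2+a_2^2+a_3^2}$; $\mathbb C$ is identified with $\{a_0+a_1\mathbf i\}$. Every quaternion array $A=A_0+A_1\mathbf i+A_2\mathbf j+A_3\mathbf k$ (real $A_t$) is written uniquely as $A=A_{\mathbf d}+\mathbf jA_{\mathbf c}$ with $A_{\mathbf d}=A_0+A_1\mathbf i$, $A_{\mathbf c}=A_2-A_3\mathbf i$. For $\mathcal A\in\mathbb Q^{n_1\times n_2\times n_3}$, $\mathcal A^{(s)}=\mathcal A(:,:,s)$. For a complex tensor $\mathcal C$, $\mathtt{bcirc}(\mathcal C)$ is the block circulant matrix with $(p,q)$ block $\mathcal C^{(((p-q)\bmod n_3)+1)}$. $P_{n_3}$ is the permutation matrix with first row $e_1^T$ and $r$-th row $e_{n_3+2-r}^T$ ($r\ge2$). $\mathtt{bcirc_z}(\mathcal A)=\mathtt{bcirc}(\mathcal A_{\mathbf d})+\mathbf j\,\mathtt{bcirc}(\mathcal A_{\mathbf c})(P_{n_3}\otimes I_{n_2})$. $\mathtt{unfold}(\mathcal B)=[\mathcal B^{(1)};\dots;\mathcal B^{(n_3)}]$, $\mathtt{fold}$ its inverse; QT-product $\mathcal A*_Q\mathcal B=\mathtt{fold}(\mathtt{bcirc_z}(\mathcal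 A)\mathtt{unfold}(\mathcal B))$. A right eigenvalue of a square quaternion matrix $M$ is $\lambda\in\mathbb Q$ with $Mx=x\lambda$ for some $x\neq0$; $\rho(M)$ is the maximum of $|\lambda|$ over right eigenvalues. QT-spectral radius: $\rho_{QT}(\mathcal A)=\rho(\mathtt{bcirc_z}(\mathcal A))$. *)

theory Defs
  imports Complex_Main
begin

datatype quat = Quat (q0: real) (q1: real) (q2: real) (q3: real)

instantiation quat :: ring_1
begin
definition "0 = Quat 0 0 0 0"
definition "1 = Quat 1 0 0 0"
definition "a + b = Quat (q0 a + q0 b) (q1 a + q1 b) (q2 a + q2 b) (q3 a + q3 b)"
definition "- a = Quat (- q0 a) (- q1 a) (- q2 a) (- q3 a)"
definition "a - b = Quat (q0 a - q0 b) (q1 a - q1 b) (q2 a - q2 b) (q3 a - q3 b)"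
definition "a * b = Quat
   (q0 a * q0 b - q1 a * q1 b - q2 a * q2 b - q3 a * q3 b)
   (q0 a * q1 b + q1 a * q0 b + q2 a * q3 b - q3 a * q2 b)
   (q0 a * q2 b - q1 a * q3 b + q2 a * q0 b + q3 a * q1 b)
   (q0 a * q3 b + q1 a * q2 b - q2 a * q1 b + q3 a * q0 b)"
instance
  by standard (simp_all add: zero_quat_def one_quat_def plus_quat_def uminus_quat_def
      minus_quat_def times_quat_def algebra_simps)
end

definition qnorm :: "quat \<Rightarrow> real" where
  "qnorm a = sqrt ((q0 a)\<^sup>2 + (q1 a)\<^sup>2 + (q2 a)\<^sup>2 + (q3 a)\<^sup>2)"

definition qj :: quat where "qj = Quat 0 0 1 0"

definition of_cplx :: "complex \<Rightarrow> quat" where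
  "of_cplx z = Quat (Re z) (Im z) 0 0"

text \<open>Complex parts: A = A_d + j A_c, A_d = A0 + A1 i, A_c = A2 - A3 i.\<close>
definition qpart_d :: "quat \<Rightarrow> complex" where "qpart_d a = Complex (q0 a) (q1 a)"
definition qpart_c :: "quat \<Rightarrow> complex" where "qpart_c a = Complex (q2 a) (- q3 a)"

section \<open>Matrices and tensors (0-based indices, explicit dimensions)\<close>

type_synonym 'a mat = "nat \<Rightarrow> nat \<Rightarrow> 'a"
type_synonym 'a tensor = "nat \<Rightarrow> nat \<Rightarrow> nat \<Rightarrow> 'a"

definition mat_mult :: "nat \<Rightarrow> 'a::semiring_0 mat \<Rightarrow> 'a mat \<Rightarrow> 'a mat" where
  "mat_mult k M N = (\<lambda>i j. \<Sum>l<k. M i l * N l j)"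

definition mat_id :: "nat \<Rightarrow> 'a::zero_neq_one mat" where
  "mat_id m = (\<lambda>i j. if i = j then 1 else 0)"

definition kron :: "nat \<Rightarrow> nat \<Rightarrow> 'a::times mat \<Rightarrow> 'a mat \<Rightarrow> 'a mat" where
  "kron p1 p2 M N = (\<lambda>i j. M (i div p1) (j div p2) * N (i mod p1) (j mod p2))"

text \<open>P_{n3}: first row e_1, r-th row e_{n3+2-r} (1-based); 0-based: row r is e_{(n3-r) mod n3}.\<close>
definition perm_P :: "nat \<Rightarrow> 'a::zero_neq_one mat" where
  "perm_P n3 = (\<lambda>r c. if c = (n3 - r) mod n3 then 1 else 0)"

text \<open>Block circulant matrix of an (n1 x n2 x n3) tensor; block (p,q) is C(:,:,(p-q) mod n3).\<close>
definition bcirc :: "nat \<Rightarrow> nat \<Rightarrow> nat \<Rightarrow> 'a tensor \<Rightarrow> 'a mat" where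
  "bcirc n1 n2 n3 C = (\<lambda>i j. C (i mod n1) (j mod n2) ((i div n1 + n3 - j div n2) mod n3))"

definition bcirc_z :: "nat \<Rightarrow> nat \<Rightarrow> nat \<Rightarrow> quat tensor \<Rightarrow> quat mat" where
  "bcirc_z n1 n2 n3 A =
     (let Ad = (\<lambda>a b s. qpart_d (A a b s));
          Ac = (\<lambda>a b s. qpart_c (A a b s));
          R = mat_mult (n2 * n3) (bcirc n1 n2 n3 Ac) (kron n2 n2 (perm_P n3) (mat_id n2))
      in (\<lambda>i j. of_cplx (bcirc n1 n2 n3 Ad i j) + qj * of_cplx (R i j)))"

definition unfold_t :: "nat \<Rightarrow> 'a tensor \<Rightarrow> 'a mat" where
  "unfold_t n1 B = (\<lambda>i j. B (i mod n1) j (i div n1))"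

definition fold_t :: "nat \<Rightarrow> 'a mat \<Rightarrow> 'a tensor" where
  "fold_t n1 M = (\<lambda>a b s. M (s * n1 + a) b)"

definition qt_prod :: "nat \<Rightarrow> nat \<Rightarrow> nat \<Rightarrow> quat tensor \<Rightarrow> quat tensor \<Rightarrow> quat tensor" where
  "qt_prod n1 n2 n3 A B = fold_t n1 (mat_mult (n2 * n3) (bcirc_z n1 n2 n3 A) (unfold_t n2 B))"

definition right_eigenvalue :: "nat \<Rightarrow> quat mat \<Rightarrow> quat \<Rightarrow> bool" where
  "right_eigenvalue m M lam \<longleftrightarrow>
     (\<exists>x :: nat \<Rightarrow> quat. (\<exists>i<m. x i \<noteq> 0) \<and> (\<forall>i<m. (\<Sum>l<m. M i l * x l) = x i * lam))"

text \<open>Maximum modulus of the right eigenvalues (the maximum exists; Sup coincides with it).\<close>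
definition spec_radius :: "nat \<Rightarrow> quat mat \<Rightarrow> real" where
  "spec_radius m M = Sup (qnorm ` {lam. right_eigenvalue m M lam})"

definition rho_QT :: "nat \<Rightarrow> nat \<Rightarrow> quat tensor \<Rightarrow> real" where
  "rho_QT n n3 A = spec_radius (n * n3) (bcirc_z n n n3 A)"

end

theory Submission
  imports Defs "Jordan_Normal_Form.Spectral_Radius"
begin

(* The map A \<mapsto> bcirc_z A turns the QT-product into the ordinary matrix product,
   bcirc_z (A *_Q B) = bcirc_z A bcirc_z B, so rho_QT (A *_Q B) and rho_QT (B *_Q A) are the
   spectral radii of M N and N M for the quaternion matrices M = bcirc_z A, N = bcirc_z B.
   If M N x = x \<lambda> with \<lambda> \<noteq> 0, then y = N x is nonzero and N M y = y \<lambda>; hence M N and N M have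
   the same nonzero right eigenvalues. Both matrices do have right eigenvalues (every eigenvalue
   of the complex adjoint matrix is one), so the two spectral radii are equal, and the two
   conditions of the theorem coincide. *)

lemma quat_eq_iff_parts: "x = y \<longleftrightarrow> qpart_d x = qpart_d y \<and> qpart_c x = qpart_c y"
  by (cases x; cases y) (auto simp: qpart_d_def qpart_c_def)

lemma qpart_d_mult: "qpart_d (x * y) = qpart_d x * qpart_d y - cnj (qpart_c x) * qpart_c y"
  by (simp add: qpart_d_def qpart_c_def times_quat_def complex_eq_iff)

lemma qpart_c_mult: "qpart_c (x * y) = cnj (qpart_d x) * qpart_c y + qpart_c x * qpart_d y"
  by (simp add: qpart_d_def qpart_c_def times_quat_def complex_eq_iff algebra_simps)

lemma qpart_d_zero [simp]: "qpart_d 0 = 0"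
  by (simp add: qpart_d_def zero_quat_def complex_eq_iff)

lemma qpart_c_zero [simp]: "qpart_c 0 = 0"
  by (simp add: qpart_c_def zero_quat_def complex_eq_iff)

lemma qpart_d_sum: "qpart_d (sum f S) = (\<Sum>x\<in>S. qpart_d (f x))"
  by (induction S rule: infinite_finite_induct)
    (auto simp: qpart_d_def plus_quat_def zero_quat_def complex_eq_iff)

lemma qpart_c_sum: "qpart_c (sum f S) = (\<Sum>x\<in>S. qpart_c (f x))"
  by (induction S rule: infinite_finite_induct)
    (auto simp: qpart_c_def plus_quat_def zero_quat_def complex_eq_iff)

lemma qpart_d_of_cplx [simp]: "qpart_d (of_cplx z) = z"
  by (simp add: qpart_d_def of_cplx_def complex_eq_iff)

lemma qpart_c_of_cplx [simp]: "qpart_c (of_cplx z) = 0"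
  by (simp add: qpart_c_def of_cplx_def complex_eq_iff)

definition quat_of_parts :: "complex \<Rightarrow> complex \<Rightarrow> quat" where
  "quat_of_parts z w = of_cplx z + qj * of_cplx w"

lemma qpart_d_quat_of_parts [simp]: "qpart_d (quat_of_parts z w) = z"
  by (simp add: quat_of_parts_def qpart_d_def of_cplx_def qj_def times_quat_def plus_quat_def
      complex_eq_iff)

lemma qpart_c_quat_of_parts [simp]: "qpart_c (quat_of_parts z w) = w"
  by (simp add: quat_of_parts_def qpart_c_def of_cplx_def qj_def times_quat_def plus_quat_def
      complex_eq_iff)

lemma qnorm_nonneg: "0 \<le> qnorm x"
  by (simp add: qnorm_def)

lemma qnorm_eq_0_iff: "qnorm x = 0 \<longleftrightarrow> x = 0"
  by (cases x) (simp add: qnorm_def zero_quat_def add_nonneg_eq_0_iff)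

lemma qnorm_mult: "qnorm (x * y) = qnorm x * qnorm y"
proof -
  have "(q0 (x*y))\<^sup>2 + (q1 (x*y))\<^sup>2 + (q2 (x*y))\<^sup>2 + (q3 (x*y))\<^sup>2
      = ((q0 x)\<^sup>2 + (q1 x)\<^sup>2 + (q2 x)\<^sup>2 + (q3 x)\<^sup>2) * ((q0 y)\<^sup>2 + (q1 y)\<^sup>2 + (q2 y)\<^sup>2 + (q3 y)\<^sup>2)"
    by (simp add: times_quat_def power2_eq_square algebra_simps)
  then show ?thesis
    by (simp add: qnorm_def real_sqrt_mult)
qed

lemma quat_of_parts_eq_0_iff: "quat_of_parts z w = 0 \<longleftrightarrow> z = 0 \<and> w = 0"
  by (simp add: quat_eq_iff_parts)

lemma quat_of_parts_mult_of_cplx: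
  "quat_of_parts (k * z) (k * w) = quat_of_parts z w * of_cplx k"
  unfolding quat_eq_iff_parts by (simp add: qpart_d_mult qpart_c_mult mult.commute)

instance quat :: ring_no_zero_divisors
  by standard (metis qnorm_eq_0_iff qnorm_mult mult_eq_0_iff)

lemma sum_lessThan_mult_blocks:
  fixes f :: "nat \<Rightarrow> 'a::comm_monoid_add"
  shows "(\<Sum>l<n * m. f l) = (\<Sum>t<m. \<Sum>c<n. f (t * n + c))"
proof -
  have "(\<Sum>l<m * n. f l) = (\<Sum>t<m. sum f {t * n..<t * n + n})"
    by (rule sum.nat_group[symmetric])
  also have "\<dots> = (\<Sum>t<m. \<Sum>c<n. f (t * n + c))"
    by (simp add: sum.shift_bounds_nat_ivl[of f 0 _ n, simplified] add.commute lessThan_atLeast0)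
  finally show ?thesis
    by (simp add: mult.commute)
qed

lemma sum_lessThan_double:
  fixes f :: "nat \<Rightarrow> 'a::comm_monoid_add"
  shows "(\<Sum>t<2 * m. f t) = (\<Sum>l<m. f l) + (\<Sum>l<m. f (l + m))"
  using sum_lessThan_mult_blocks[of f m 2] by (simp add: numeral_2_eq_2 mult.commute add.commute)

definition residue :: "nat \<Rightarrow> int \<Rightarrow> nat" where
  "residue m k = nat (k mod int m)"

lemma residue_less: "0 < m \<Longrightarrow> residue m k < m"
  by (simp add: residue_def nat_less_iff)

lemma residue_of_nat: "l < m \<Longrightarrow> residue m (int l) = l"
  by (simp add: residue_def)

lemma residue_add_left: "0 < m \<Longrightarrow> residue m (int (residue m x) + y) = residue m (x + y)"
  and residue_add_right: "0 < m \<Longrightarrow> residue m (y + int (residue m x)) = residue m (y + x)"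
  and residue_diff_left: "0 < m \<Longrightarrow> residue m (int (residue m x) - y) = residue m (x - y)"
  and residue_diff_right: "0 < m \<Longrightarrow> residue m (y - int (residue m x)) = residue m (y - x)"
  by (simp_all add: residue_def mod_simps)

lemmas residue_simps = residue_add_left residue_add_right residue_diff_left residue_diff_right

lemma nat_mod_eq_residue_diff:
  assumes "y < m"
  shows "(x + m - y) mod m = residue m (int x - int y)"
proof -
  have "int ((x + m - y) mod m) = (int x - int y + int m) mod int m"
    using assms by (simp add: zmod_int of_nat_diff algebra_simps)
  then show ?thesis
    by (simp add: residue_def)
qed

lemma sum_residue_shift:
  assumes "0 < m"
  shows "(\<Sum>l<m. G (residue m (int l + k))) = (\<Sum>l<m. G l)"
proof -
  have "bij_betw (\<lambda>l. residue m (int l + k)) {..<m} {..<m}"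
    by (rule bij_betw_byWitness[where f' = "\<lambda>l. residue m (int l - k)"])
      (use assms in \<open>auto simp: residue_simps residue_of_nat residue_less\<close>)
  then show ?thesis
    by (rule sum.reindex_bij_betw)
qed

lemma sum_residue_conv_shift:
  assumes "0 < m"
  shows "(\<Sum>t<m. F (residue m (x - int t)) (residue m (int t - y)))
       = (\<Sum>t<m. F (residue m (x - y - int t)) t)"
proof -
  have "(\<Sum>t<m. F (residue m (x - y - int t)) t)
      = (\<Sum>t<m. F (residue m (x - y - int (residue m (int t - y)))) (residue m (int t - y)))"
    using sum_residue_shift[OF assms, of "\<lambda>t. F (residue m (x - y - int t)) t" "- y"] by simp
  also have "\<dots> = (\<Sum>t<m. F (residue m (x - int t)) (residue m (int t - y)))"
    using assms by (simp add: residue_simps)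
  finally show ?thesis ..
qed

lemma sum_residue_corr_shift:
  assumes "0 < m"
  shows "(\<Sum>t<m. F (residue m (x + int t)) (residue m (int t + y)))
       = (\<Sum>t<m. F (residue m (x - y + int t)) t)"
proof -
  have "(\<Sum>t<m. F (residue m (x - y + int t)) t)
      = (\<Sum>t<m. F (residue m (x - y + int (residue m (int t + y)))) (residue m (int t + y)))"
    using sum_residue_shift[OF assms, of "\<lambda>t. F (residue m (x - y + int t)) t" y] by simp
  also have "\<dots> = (\<Sum>t<m. F (residue m (x + int t)) (residue m (int t + y)))"
    using assms by (simp add: residue_simps)
  finally show ?thesis ..
qed

lemma block_index_less:
  assumes "t < n3" and "c < n2"
  shows "t * n2 + c < n2 * (n3::nat)"
proof -
  have "t * n2 + c < (t + 1) * n2"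
    using assms(2) by simp
  also have "\<dots> \<le> n3 * n2"
    using assms(1) by (intro mult_right_mono) simp_all
  finally show ?thesis
    by (simp add: mult.commute)
qed

lemma mat_mult_kron_perm_P_id:
  fixes M :: "nat \<Rightarrow> nat \<Rightarrow> 'a::semiring_1"
  assumes "0 < n3" and "j < n2 * n3"
  shows "mat_mult (n2 * n3) M (kron n2 n2 (perm_P n3) (mat_id n2)) i j
       = M i (((n3 - j div n2) mod n3) * n2 + j mod n2)"
proof -
  define l0 where "l0 = ((n3 - j div n2) mod n3) * n2 + j mod n2"
  have "0 < n2"
    using assms(2) by (cases n2) auto
  have jb: "j div n2 < n3"
    using assms(2) by (simp add: less_mult_imp_div_less mult.commute)
  have l0: "l0 < n2 * n3"
    unfolding l0_def using assms(1) \<open>0 < n2\<close> by (intro block_index_less) simp_all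
  have column: "kron n2 n2 (perm_P n3) (mat_id n2) l j = (if l = l0 then 1 else (0::'a))"
    if "l < n2 * n3" for l
  proof -
    have "l div n2 < n3"
      using that by (simp add: less_mult_imp_div_less mult.commute)
    then have "j div n2 = (n3 - l div n2) mod n3 \<longleftrightarrow> l div n2 = (n3 - j div n2) mod n3"
      using jb by (cases "l div n2 = 0"; cases "j div n2 = 0") (auto simp: mod_if)
    moreover have "l = l0 \<longleftrightarrow> l div n2 = l0 div n2 \<and> l mod n2 = l0 mod n2"
      by (metis div_mult_mod_eq)
    ultimately show ?thesis
      using \<open>0 < n2\<close> by (auto simp: kron_def perm_P_def mat_id_def l0_def)
  qed
  have "mat_mult (n2 * n3) M (kron n2 n2 (perm_P n3) (mat_id n2)) i j
      = (\<Sum>l<n2 * n3. if l = l0 then M i l else 0)"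
    unfolding mat_mult_def by (rule sum.cong) (simp_all add: column)
  also have "\<dots> = M i l0"
    using l0 by simp
  finally show ?thesis
    by (simp add: l0_def)
qed

(* The (s, t) entry of the (a, c) block of bcirc_z A, for the tube F = A a c: the j-part is
   multiplied by P, which turns its circulant pattern s - t into the anti-circulant s + t. *)
definition twisted_circ :: "nat \<Rightarrow> (nat \<Rightarrow> quat) \<Rightarrow> nat \<Rightarrow> nat \<Rightarrow> quat" where
  "twisted_circ m F s t = quat_of_parts
     (qpart_d (F (residue m (int s - int t)))) (qpart_c (F (residue m (int s + int t))))"

lemma bcirc_z_entry:
  assumes "0 < n3" and "j < n2 * n3"
  shows "bcirc_z n1 n2 n3 A i j = twisted_circ n3 (A (i mod n1) (j mod n2)) (i div n1) (j div n2)"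
proof -
  have "0 < n2"
    using assms(2) by (cases n2) auto
  have jb: "j div n2 < n3"
    using assms(2) by (simp add: less_mult_imp_div_less mult.commute)
  let ?Ac = "\<lambda>a b s. qpart_c (A a b s)"
  have "(i div n1 + n3 - (n3 - j div n2) mod n3) mod n3 = residue n3 (int (i div n1) + int (j div n2))"
    using assms(1) jb by (simp add: nat_mod_eq_residue_diff residue_def zmod_int of_nat_diff mod_simps)
  then have R: "mat_mult (n2 * n3) (bcirc n1 n2 n3 ?Ac) (kron n2 n2 (perm_P n3) (mat_id n2)) i j
      = ?Ac (i mod n1) (j mod n2) (residue n3 (int (i div n1) + int (j div n2)))"
    using assms \<open>0 < n2\<close> by (simp add: mat_mult_kron_perm_P_id bcirc_def)
  have "bcirc_z n1 n2 n3 A i j = of_cplx (bcirc n1 n2 n3 (\<lambda>a b s. qpart_d (A a b s)) i j)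
      + qj * of_cplx (mat_mult (n2 * n3) (bcirc n1 n2 n3 ?Ac) (kron n2 n2 (perm_P n3) (mat_id n2)) i j)"
    unfolding bcirc_z_def Let_def ..
  also have "\<dots> = of_cplx (qpart_d (A (i mod n1) (j mod n2) (residue n3 (int (i div n1) - int (j div n2)))))
      + qj * of_cplx (qpart_c (A (i mod n1) (j mod n2) (residue n3 (int (i div n1) + int (j div n2)))))"
    unfolding R by (simp only: bcirc_def nat_mod_eq_residue_diff[OF jb])
  finally show ?thesis
    by (simp only: twisted_circ_def quat_of_parts_def)
qed

lemma bcirc_z_block_entry:
  assumes "a < n1" and "c < n2" and "t < n3"
  shows "bcirc_z n1 n2 n3 A (s * n1 + a) (t * n2 + c) = twisted_circ n3 (A a c) s t"
  using assms bcirc_z_entry[of n3 "t * n2 + c" n2 n1 A "s * n1 + a"] block_index_less[of t n3 c n2]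
  by simp

lemma qt_prod_eq_block_sum:
  assumes "a < n1"
  shows "qt_prod n1 n2 n3 A B a b r = (\<Sum>t<n3. \<Sum>c<n2. twisted_circ n3 (A a c) r t * B c b t)"
  using assms
  by (simp add: qt_prod_def fold_t_def mat_mult_def unfold_t_def sum_lessThan_mult_blocks
      bcirc_z_block_entry mult.commute)

lemma sum_twisted_circ_mult:
  fixes F G :: "nat \<Rightarrow> nat \<Rightarrow> quat"
  assumes m: "0 < m"
  shows "(\<Sum>t<m. \<Sum>c<n. twisted_circ m (F c) s t * twisted_circ m (G c) t u)
       = twisted_circ m (\<lambda>r. \<Sum>t<m. \<Sum>c<n. twisted_circ m (F c) r t * G c t) s u"
    (is "?P = twisted_circ m ?H s u")
proof -
  define Fd Fc Gd Gc where "Fd c k = qpart_d (F c k)" and "Fc c k = qpart_c (F c k)"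
    and "Gd c k = qpart_d (G c k)" and "Gc c k = qpart_c (G c k)" for c k
  note parts = twisted_circ_def Fd_def Fc_def Gd_def Gc_def
  have "qpart_d ?P = (\<Sum>t<m. \<Sum>c<n. Fd c (residue m (int s - int t)) * Gd c (residue m (int t - int u)))
      - (\<Sum>t<m. \<Sum>c<n. cnj (Fc c (residue m (int s + int t))) * Gc c (residue m (int t + int u)))"
    by (simp add: parts qpart_d_sum qpart_d_mult sum_subtractf)
  also have "\<dots> = (\<Sum>t<m. \<Sum>c<n. Fd c (residue m (int s - int u - int t)) * Gd c t)
      - (\<Sum>t<m. \<Sum>c<n. cnj (Fc c (residue m (int s - int u + int t))) * Gc c t)"
    using sum_residue_conv_shift[OF m, of "\<lambda>p q. \<Sum>c<n. Fd c p * Gd c q"]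
      sum_residue_corr_shift[OF m, of "\<lambda>p q. \<Sum>c<n. cnj (Fc c p) * Gc c q"]
    by simp
  also have "\<dots> = qpart_d (?H (residue m (int s - int u)))"
    using m by (simp add: parts qpart_d_sum qpart_d_mult sum_subtractf residue_simps)
  finally have d: "qpart_d ?P = qpart_d (?H (residue m (int s - int u)))" .
  have "qpart_c ?P = (\<Sum>t<m. \<Sum>c<n. cnj (Fd c (residue m (int s - int t))) * Gc c (residue m (int t + int u)))
      + (\<Sum>t<m. \<Sum>c<n. Fc c (residue m (int s + int t)) * Gd c (residue m (int t - int u)))"
    by (simp add: parts qpart_c_sum qpart_c_mult sum.distrib)
  also have "\<dots> = (\<Sum>t<m. \<Sum>c<n. cnj (Fd c (residue m (int s + int u - int t))) * Gc c t)
      + (\<Sum>t<m. \<Sum>c<n. Fc c (residue m (int s + int u + int t)) * Gd c t)"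
    using sum_residue_conv_shift[OF m, of "\<lambda>p q. \<Sum>c<n. cnj (Fd c p) * Gc c q" "int s" "- int u"]
      sum_residue_corr_shift[OF m, of "\<lambda>p q. \<Sum>c<n. Fc c p * Gd c q" "int s" "- int u"]
    by simp
  also have "\<dots> = qpart_c (?H (residue m (int s + int u)))"
    using m by (simp add: parts qpart_c_sum qpart_c_mult sum.distrib residue_simps)
  finally have c: "qpart_c ?P = qpart_c (?H (residue m (int s + int u)))" .
  show ?thesis
    using d c by (simp add: quat_eq_iff_parts twisted_circ_def)
qed

lemma bcirc_z_qt_prod:
  assumes "0 < n" and "0 < n3" and "i < n * n3" and "j < n * n3"
  shows "bcirc_z n n n3 (qt_prod n n n3 A B) i j
       = mat_mult (n * n3) (bcirc_z n n n3 A) (bcirc_z n n n3 B) i j"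
proof -
  define s a u b where "s = i div n" and "a = i mod n" and "u = j div n" and "b = j mod n"
  have "a < n" "b < n" "u < n3" and ij: "i = s * n + a" "j = u * n + b"
    using assms by (simp_all add: s_def a_def u_def b_def less_mult_imp_div_less mult.commute)
  have qt: "qt_prod n n n3 A B a b = (\<lambda>r. \<Sum>t<n3. \<Sum>c<n. twisted_circ n3 (A a c) r t * B c b t)"
    using \<open>a < n\<close> by (simp add: fun_eq_iff qt_prod_eq_block_sum)
  have "mat_mult (n * n3) (bcirc_z n n n3 A) (bcirc_z n n n3 B) i j
      = (\<Sum>t<n3. \<Sum>c<n. twisted_circ n3 (A a c) s t * twisted_circ n3 (\<lambda>k. B c b k) t u)"
    unfolding mat_mult_def sum_lessThan_mult_blocks ij
    by (intro sum.cong refl) (simp add: \<open>a < n\<close> \<open>b < n\<close> \<open>u < n3\<close> bcirc_z_block_entry)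
  also have "\<dots> = twisted_circ n3 (qt_prod n n n3 A B a b) s u"
    unfolding qt using assms(2) by (rule sum_twisted_circ_mult)
  also have "\<dots> = bcirc_z n n n3 (qt_prod n n n3 A B) i j"
    using \<open>a < n\<close> \<open>b < n\<close> \<open>u < n3\<close> by (simp add: ij bcirc_z_block_entry)
  finally show ?thesis ..
qed

lemma right_eigenvalue_cong:
  assumes "\<And>i l. i < m \<Longrightarrow> l < m \<Longrightarrow> M i l = N i l"
  shows "right_eigenvalue m M lam = right_eigenvalue m N lam"
proof -
  have "(\<Sum>l<m. M i l * x l) = (\<Sum>l<m. N i l * x l)" if "i < m" for i x
    using assms that by (intro sum.cong) auto
  then show ?thesis
    unfolding right_eigenvalue_def by simp
qed

lemma spec_radius_cong:
  assumes "\<And>i l. i < m \<Longrightarrow> l < m \<Longrightarrow> M i l = N i l"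
  shows "spec_radius m M = spec_radius m N"
proof -
  have "right_eigenvalue m M = right_eigenvalue m N"
    by (rule ext) (rule right_eigenvalue_cong[OF assms])
  then show ?thesis
    unfolding spec_radius_def by simp
qed

lemma sum_mat_mult_apply:
  "(\<Sum>l<m. mat_mult m M N i l * x l) = (\<Sum>k<m. M i k * (\<Sum>l<m. N k l * x l))"
proof -
  have "(\<Sum>l<m. mat_mult m M N i l * x l) = (\<Sum>l<m. \<Sum>k<m. M i k * (N k l * x l))"
    by (simp add: mat_mult_def sum_distrib_right mult.assoc)
  also have "\<dots> = (\<Sum>k<m. M i k * (\<Sum>l<m. N k l * x l))"
    by (subst sum.swap) (simp add: sum_distrib_left)
  finally show ?thesis .
qed

lemma right_eigenvalue_mat_mult_swap:
  assumes "lam \<noteq> 0" and "right_eigenvalue m (mat_mult m M N) lam"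
  shows "right_eigenvalue m (mat_mult m N M) lam"
proof -
  obtain x where x: "\<exists>i<m. x i \<noteq> 0" "\<forall>i<m. (\<Sum>l<m. mat_mult m M N i l * x l) = x i * lam"
    using assms(2) unfolding right_eigenvalue_def by blast
  define y where "y k = (\<Sum>l<m. N k l * x l)" for k
  have My: "(\<Sum>k<m. M i k * y k) = x i * lam" if "i < m" for i
    using x(2) that by (simp add: y_def sum_mat_mult_apply)
  have "\<exists>i<m. y i \<noteq> 0"
  proof (rule ccontr)
    assume "\<not> (\<exists>i<m. y i \<noteq> 0)"
    then have "\<forall>i<m. x i * lam = 0"
      using My by simp
    then show False
      using x(1) assms(1) by auto
  qed
  moreover have "(\<Sum>l<m. mat_mult m N M i l * y l) = y i * lam" if "i < m" for i
    using My by (simp add: sum_mat_mult_apply y_def sum_distrib_right mult.assoc)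
  ultimately show ?thesis
    unfolding right_eigenvalue_def by blast
qed

(* The complex adjoint [[M_d, - conj M_c], [M_c, conj M_d]] of M = M_d + j M_c: it acts on
   (x_d, x_c) \<in> C^(2m) as M acts on x = x_d + j x_c \<in> Q^m. *)
definition complex_adjoint :: "nat \<Rightarrow> (nat \<Rightarrow> nat \<Rightarrow> quat) \<Rightarrow> complex Matrix.mat" where
  "complex_adjoint m M = Matrix.mat (2 * m) (2 * m) (\<lambda>(i, l).
     if i < m then (if l < m then qpart_d (M i l) else - cnj (qpart_c (M i (l - m))))
     else (if l < m then qpart_c (M (i - m) l) else cnj (qpart_d (M (i - m) (l - m)))))"

lemma complex_adjoint_mult_vec:
  assumes "v \<in> carrier_vec (2 * m)" and "i < m"
  shows "(\<Sum>l<m. M i l * quat_of_parts (v $ l) (v $ (l + m)))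
       = quat_of_parts ((complex_adjoint m M *\<^sub>v v) $ i) ((complex_adjoint m M *\<^sub>v v) $ (i + m))"
proof -
  let ?CM = "complex_adjoint m M"
  have "?CM \<in> carrier_mat (2 * m) (2 * m)"
    by (simp add: complex_adjoint_def)
  then have row: "(?CM *\<^sub>v v) $ r = (\<Sum>l<m. ?CM $$ (r, l) * v $ l) + (\<Sum>l<m. ?CM $$ (r, l + m) * v $ (l + m))"
    if "r < 2 * m" for r
    using that assms(1) by (simp add: scalar_prod_def atLeast0LessThan sum_lessThan_double)
  have entries: "?CM $$ (i, l) = qpart_d (M i l)" "?CM $$ (i, l + m) = - cnj (qpart_c (M i l))"
      "?CM $$ (i + m, l) = qpart_c (M i l)" "?CM $$ (i + m, l + m) = cnj (qpart_d (M i l))"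
    if "l < m" for l
    using assms(2) that by (simp_all add: complex_adjoint_def)
  have "(?CM *\<^sub>v v) $ i = (\<Sum>l<m. qpart_d (M i l) * v $ l - cnj (qpart_c (M i l)) * v $ (l + m))"
    using assms(2) by (simp add: row entries sum_subtractf sum_negf)
  moreover have "(?CM *\<^sub>v v) $ (i + m)
      = (\<Sum>l<m. cnj (qpart_d (M i l)) * v $ (l + m) + qpart_c (M i l) * v $ l)"
    using assms(2) by (simp add: row entries sum.distrib add.commute)
  ultimately show ?thesis
    by (simp add: quat_eq_iff_parts qpart_d_sum qpart_c_sum qpart_d_mult qpart_c_mult)
qed

lemma right_eigenvalue_if_complex_adjoint_eigenvalue:
  assumes "eigenvalue (complex_adjoint m M) k"
  shows "right_eigenvalue m M (of_cplx k)"
proof -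
  obtain v where v: "v \<in> carrier_vec (2 * m)" "v \<noteq> 0\<^sub>v (2 * m)"
      "complex_adjoint m M *\<^sub>v v = k \<cdot>\<^sub>v v"
    using assms unfolding eigenvalue_def eigenvector_def by (auto simp: complex_adjoint_def)
  define x where "x l = quat_of_parts (v $ l) (v $ (l + m))" for l
  obtain t where t: "t < 2 * m" "v $ t \<noteq> 0"
    using v(1,2) by (metis carrier_vecD index_zero_vec(1) eq_vecI index_zero_vec(2))
  then have "\<exists>i<m. x i \<noteq> 0"
    by (cases "t < m") (auto simp: x_def quat_of_parts_eq_0_iff intro: exI[of _ "t - m"])
  moreover have "(\<Sum>l<m. M i l * x l) = x i * of_cplx k" if "i < m" for i
    using that v(1,3) by (simp add: x_def complex_adjoint_mult_vec quat_of_parts_mult_of_cplx)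
  ultimately show ?thesis
    unfolding right_eigenvalue_def by blast
qed

lemma right_eigenvalue_exists:
  assumes "0 < m"
  obtains lam where "right_eigenvalue m M lam"
proof -
  have "complex_adjoint m M \<in> carrier_mat (2 * m) (2 * m)"
    by (simp add: complex_adjoint_def)
  then obtain k where "k \<in> spectrum (complex_adjoint m M)"
    using spectrum_non_empty assms by fastforce
  then have "eigenvalue (complex_adjoint m M) k"
    by (simp add: spectrum_def)
  then show ?thesis
    using that right_eigenvalue_if_complex_adjoint_eigenvalue by blast
qed

lemma Sup_eq_if_nonzero_elements_eq:
  fixes S T :: "real set"
  assumes "S \<noteq> {}" and "T \<noteq> {}" and "S - {0} = T - {0}" and "\<forall>x \<in> S \<union> T. 0 \<le> x"
  shows "Sup S = Sup T"
proof (cases "\<exists>p\<in>S. p > 0")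
  case True
  then obtain p where p: "p \<in> S" "p \<in> T" "p > 0"
    using assms(3) by blast
  have upper_bound_iff: "(\<forall>x\<in>X. x \<le> z) \<longleftrightarrow> p \<le> z \<and> (\<forall>x\<in>X - {0}. x \<le> z)"
    if "p \<in> X" for X z
  proof
    show "p \<le> z \<and> (\<forall>x\<in>X - {0}. x \<le> z)" if "\<forall>x\<in>X. x \<le> z"
      using that \<open>p \<in> X\<close> by blast
    show "\<forall>x\<in>X. x \<le> z" if "p \<le> z \<and> (\<forall>x\<in>X - {0}. x \<le> z)"
    proof
      fix x
      assume "x \<in> X"
      then show "x \<le> z"
        using that p(3) by (cases "x = 0") auto
    qed
  qed
  have "(\<forall>x\<in>S. x \<le> z) \<longleftrightarrow> (\<forall>x\<in>T. x \<le> z)" for z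
    using upper_bound_iff[OF p(1)] upper_bound_iff[OF p(2)] assms(3) by simp
  then show ?thesis
    unfolding Sup_real_def by simp
next
  case False
  then have "S \<subseteq> {0}"
    using assms(4) by force
  then have "S = {0}" and "T = {0}"
    using assms(1-3) by blast+
  then show ?thesis
    by simp
qed

lemma spec_radius_mat_mult_commute:
  assumes "0 < m"
  shows "spec_radius m (mat_mult m M N) = spec_radius m (mat_mult m N M)"
proof -
  let ?S = "qnorm ` {lam. right_eigenvalue m (mat_mult m M N) lam}"
  let ?T = "qnorm ` {lam. right_eigenvalue m (mat_mult m N M) lam}"
  have "{lam. right_eigenvalue m (mat_mult m M N) lam} - {0}
      = {lam. right_eigenvalue m (mat_mult m N M) lam} - {0}"
    using right_eigenvalue_mat_mult_swap[of _ m M N] right_eigenvalue_mat_mult_swap[of _ m N M] by blast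
  moreover have "qnorm ` X - {0} = qnorm ` (X - {0})" for X
    by (auto simp: qnorm_eq_0_iff)
  ultimately have "?S - {0} = ?T - {0}"
    by simp
  moreover have "?S \<noteq> {}" and "?T \<noteq> {}"
    using right_eigenvalue_exists[OF assms] by blast+
  ultimately show ?thesis
    unfolding spec_radius_def by (intro Sup_eq_if_nonzero_elements_eq) (auto simp: qnorm_nonneg)
qed

lemma rho_QT_qt_prod_commute:
  assumes "0 < n" and "0 < n3"
  shows "rho_QT n n3 (qt_prod n n n3 A B) = rho_QT n n3 (qt_prod n n n3 B A)"
proof -
  have "rho_QT n n3 (qt_prod n n n3 A' B')
      = spec_radius (n * n3) (mat_mult (n * n3) (bcirc_z n n n3 A') (bcirc_z n n n3 B'))" for A' B'
    unfolding rho_QT_def using assms by (intro spec_radius_cong bcirc_z_qt_prod)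
  then show ?thesis
    using assms by (simp add: spec_radius_mat_mult_commute)
qed

theorem lemma4p3:
  fixes A B :: "quat tensor" and n n3 :: nat
  assumes "0 < n" and "0 < n3"
  shows "(0 < rho_QT n n3 (qt_prod n n n3 A B) \<and> rho_QT n n3 (qt_prod n n n3 A B) < 1)
     \<longleftrightarrow> (0 < rho_QT n n3 (qt_prod n n n3 B A) \<and> rho_QT n n3 (qt_prod n n n3 B A) < 1)"
  using rho_QT_qt_prod_commute[OF assms] by simp

end
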